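(* Let $n = 2g+2$ for an integer $g\ge 0$, and let $\mathcal{J}[2]$ be the $S_n$-module of subsets of $\{1,\dots,n\}$ modulo complements, with group law induced by symmetric difference and $S_n$ acting by permuting $\{1,\dots,n\}$. Then $H^1_*(S_n,\mathcal{J}[2]) = 0$.
   Context: For a finite group $G$ and $G$-module $M$, $H^1_*(G,M) := \ker\big(H^1(G,M)\to\prod_{g\in G}H^1(\langle g\rangle,M)\big)$, the map being the product of restrictions to cyclic subgroups. *)

theory Defs
  imports "HOL-Algebra.Sym_Groups" "HOL-Algebra.Generated_Groups"
begin

text \<open>Group cohomology H^1 via crossed homomorphisms (1-cocycles) modulo
principal ones (1-coboundaries). The module M is an abelian group written
multiplicatively (HOL-Algebra monoid record), G acts via act.\<close>

definition crossed_hom ::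
  "('g,'x) monoid_scheme \<Rightarrow> ('m,'y) monoid_scheme \<Rightarrow> ('g \<Rightarrow> 'm \<Rightarrow> 'm) \<Rightarrow> ('g \<Rightarrow> 'm) \<Rightarrow> bool" where
  "crossed_hom G M act f \<longleftrightarrow> f \<in> carrier G \<rightarrow> carrier M \<and>
     (\<forall>g\<in>carrier G. \<forall>h\<in>carrier G. f (g \<otimes>\<^bsub>G\<^esub> h) = f g \<otimes>\<^bsub>M\<^esub> act g (f h))"

definition principal_on ::
  "('m,'y) monoid_scheme \<Rightarrow> ('g \<Rightarrow> 'm \<Rightarrow> 'm) \<Rightarrow> 'g set \<Rightarrow> ('g \<Rightarrow> 'm) \<Rightarrow> bool" where
  "principal_on M act S f \<longleftrightarrow>
     (\<exists>m\<in>carrier M. \<forall>g\<in>S. f g = act g m \<otimes>\<^bsub>M\<^esub> inv\<^bsub>M\<^esub> m)"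

text \<open>H^1_*(G,M) = 0: every cocycle whose class restricts to zero in
H^1(<g>,M) for all g is a coboundary.\<close>
definition H1_star_trivial ::
  "('g,'x) monoid_scheme \<Rightarrow> ('m,'y) monoid_scheme \<Rightarrow> ('g \<Rightarrow> 'm \<Rightarrow> 'm) \<Rightarrow> bool" where
  "H1_star_trivial G M act \<longleftrightarrow>
     (\<forall>f. crossed_hom G M act f \<and>
          (\<forall>g\<in>carrier G. principal_on M act (generate G {g}) f)
          \<longrightarrow> principal_on M act (carrier G) f)"

definition J2 :: "nat \<Rightarrow> nat set set monoid" where
  "J2 n = \<lparr> carrier = {{A, {1..n} - A} | A. A \<subseteq> {1..n}},
            mult = (\<lambda>X Y. {C. \<exists>A\<in>X. \<exists>B\<in>Y. C = (A - B) \<union> (B - A)}),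
            one = {{}, {1..n}} \<rparr>"

definition J2_act :: "(nat \<Rightarrow> nat) \<Rightarrow> nat set set \<Rightarrow> nat set set" where
  "J2_act \<sigma> X = (\<lambda>A. \<sigma> ` A) ` X"

end

theory Submission
  imports Defs
begin

text \<open>A cocycle f that is locally a coboundary takes each transposition (1 i) to the class
of (1 i)B \<triangle> B for some B, i.e. to 0 or to the class of {1, i}. Let A be the set of those i
for which it is the latter; then f agrees with the coboundary s \<mapsto> sA \<triangle> A on all
transpositions (1 i). These generate S_n, and two cocycles that agree on generators agree
everywhere, so f is the coboundary of the class of A.\<close>

lemma permutes_induct_star_transpositions:
  assumes "p permutes S" "finite S" "c \<in> S"
    and star: "\<And>i. i \<in> S \<Longrightarrow> P (transpose c i)"
    and comp: "\<And>p q. p permutes S \<Longrightarrow> q permutes S \<Longrightarrow> P p \<Longrightarrow> P q \<Longrightarrow> P (p \<circ> q)"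
  shows "P p"
proof -
  have star_perm: "transpose c i permutes S" if "i \<in> S" for i
    using \<open>c \<in> S\<close> that by (rule permutes_swap_id)
  have transp: "P (transpose a b)" if "a \<in> S" "b \<in> S" for a b
  proof (cases "a = b \<or> a = c \<or> b = c")
    case True
    then show ?thesis
    proof (elim disjE)
      assume "a = b"
      then show ?thesis using star[OF \<open>c \<in> S\<close>] by simp
    next
      assume "a = c"
      then show ?thesis using star[OF \<open>b \<in> S\<close>] by simp
    next
      assume "b = c"
      then show ?thesis using star[OF \<open>a \<in> S\<close>] by (simp add: transpose_commute)
    qed
  next
    case False
    then have "transpose a b = transpose c a \<circ> transpose c b \<circ> transpose c a"
      using transpose_comp_triple[where a = a and b = c and c = b]
      by (auto simp: transpose_commute[of c a])
    then show ?thesis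
      by (simp only:) (intro comp permutes_compose star star_perm that)
  qed
  from assms(1,2) show ?thesis
  proof (induction rule: permutes_induct)
    case id
    show ?case using star[OF \<open>c \<in> S\<close>] by (simp add: id_def)
  next
    case (swap a b p)
    then show ?case by (intro comp permutes_swap_id transp)
  qed
qed

lemma crossed_hom_sym_group_eqI:
  assumes f: "crossed_hom (sym_group n) M act f" and h: "crossed_hom (sym_group n) M act h"
    and c: "c \<in> {1..n}"
    and star: "\<And>i. i \<in> {1..n} \<Longrightarrow> f (transpose c i) = h (transpose c i)"
    and p: "p permutes {1..n}"
  shows "f p = h p"
  using p finite_atLeastAtMost c star
proof (rule permutes_induct_star_transpositions)
  fix p q assume "p permutes {1..n}" "q permutes {1..n}" and eq: "f p = h p" "f q = h q"
  then have "p \<in> carrier (sym_group n)" "q \<in> carrier (sym_group n)"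
    by (simp_all add: sym_group_carrier)
  with f h have "f (p \<circ> q) = f p \<otimes>\<^bsub>M\<^esub> act p (f q)" "h (p \<circ> q) = h p \<otimes>\<^bsub>M\<^esub> act p (h q)"
    unfolding crossed_hom_def sym_group_mult by blast+
  with eq show "f (p \<circ> q) = h (p \<circ> q)" by simp
qed

declare One_nat_def [simp del] \<comment> \<open>keeps \<open>{1..n}\<close> in the shape fixed by \<open>J2\<close> and \<open>sym_group\<close>\<close>

definition cls :: "nat set \<Rightarrow> nat set \<Rightarrow> nat set set" where
  "cls N A = {A, N - A}"

lemma J2_carrier: "carrier (J2 n) = {cls {1..n} A | A. A \<subseteq> {1..n}}"
  by (simp add: J2_def cls_def)

lemma cls_in_J2_carrier: "A \<subseteq> {1..n} \<Longrightarrow> cls {1..n} A \<in> carrier (J2 n)"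
  by (auto simp: J2_carrier)

lemma J2_one: "\<one>\<^bsub>J2 n\<^esub> = cls {1..n} {}"
  by (simp add: J2_def cls_def)

lemma J2_mult_cls:
  assumes "A \<subseteq> {1..n}" "B \<subseteq> {1..n}"
  shows "cls {1..n} A \<otimes>\<^bsub>J2 n\<^esub> cls {1..n} B = cls {1..n} (sym_diff A B)"
  using assms unfolding J2_def cls_def by auto

lemma cls_eq_iff:
  assumes "A \<subseteq> N" "B \<subseteq> N"
  shows "cls N A = cls N B \<longleftrightarrow> A = B \<or> A = N - B"
  using assms unfolding cls_def doubleton_eq_iff by auto

lemma permutes_image_subset: "p permutes S \<Longrightarrow> A \<subseteq> S \<Longrightarrow> p ` A \<subseteq> S"
  by (metis image_mono permutes_image)

lemma J2_act_cls:
  assumes "s permutes {1..n}" "A \<subseteq> {1..n}"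
  shows "J2_act s (cls {1..n} A) = cls {1..n} (s ` A)"
proof -
  have "s ` ({1..n} - A) = s ` {1..n} - s ` A"
    using permutes_inj[OF assms(1)] by (rule image_set_diff)
  also have "\<dots> = {1..n} - s ` A"
    by (simp only: permutes_image[OF assms(1)])
  finally have "s ` ({1..n} - A) = {1..n} - s ` A" .
  then show ?thesis by (simp add: J2_act_def cls_def)
qed

lemma J2_inv_cls:
  assumes A: "A \<subseteq> {1..n}"
  shows "inv\<^bsub>J2 n\<^esub> (cls {1..n} A) = cls {1..n} A"
  unfolding m_inv_def
proof (rule the_equality)
  show "cls {1..n} A \<in> carrier (J2 n) \<and> cls {1..n} A \<otimes>\<^bsub>J2 n\<^esub> cls {1..n} A = \<one>\<^bsub>J2 n\<^esub> \<and>
    cls {1..n} A \<otimes>\<^bsub>J2 n\<^esub> cls {1..n} A = \<one>\<^bsub>J2 n\<^esub>"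
    using A by (simp add: cls_in_J2_carrier J2_mult_cls J2_one)
next
  fix y assume y: "y \<in> carrier (J2 n) \<and> cls {1..n} A \<otimes>\<^bsub>J2 n\<^esub> y = \<one>\<^bsub>J2 n\<^esub> \<and>
    y \<otimes>\<^bsub>J2 n\<^esub> cls {1..n} A = \<one>\<^bsub>J2 n\<^esub>"
  then obtain B where B: "B \<subseteq> {1..n}" "y = cls {1..n} B" by (auto simp: J2_carrier)
  with y A have "cls {1..n} (sym_diff A B) = cls {1..n} {}"
    by (simp add: J2_mult_cls J2_one)
  then have "B = A \<or> B = {1..n} - A"
    using A B by (subst (asm) cls_eq_iff) auto
  then show "y = cls {1..n} A"
    using A B by (auto simp: cls_def)
qed

lemma J2_coboundary_cls:
  assumes "s permutes {1..n}" "B \<subseteq> {1..n}"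
  shows "J2_act s (cls {1..n} B) \<otimes>\<^bsub>J2 n\<^esub> inv\<^bsub>J2 n\<^esub> (cls {1..n} B) = cls {1..n} (sym_diff (s ` B) B)"
  using assms permutes_image_subset[OF assms]
  by (simp add: J2_act_cls J2_inv_cls J2_mult_cls)

lemma sym_diff_transpose_image:
  "sym_diff (transpose a b ` B) B = (if a \<in> B \<longleftrightarrow> b \<in> B then {} else {a, b})"
  by (auto simp: transpose_def image_iff)

lemma crossed_hom_J2_coboundary:
  assumes B: "B \<subseteq> {1..n}"
  shows "crossed_hom (sym_group n) (J2 n) J2_act (\<lambda>s. cls {1..n} (sym_diff (s ` B) B))"
  unfolding crossed_hom_def
proof (intro conjI ballI Pi_I)
  fix s assume "s \<in> carrier (sym_group n)"
  then have s: "s permutes {1..n}" by (simp add: sym_group_carrier)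
  then show "cls {1..n} (sym_diff (s ` B) B) \<in> carrier (J2 n)"
    using permutes_image_subset[OF s B] B by (intro cls_in_J2_carrier) auto
  fix t assume "t \<in> carrier (sym_group n)"
  then have t: "t permutes {1..n}" by (simp add: sym_group_carrier)
  have tB: "t ` B \<subseteq> {1..n}" and sB: "s ` B \<subseteq> {1..n}"
    using B by (simp_all add: permutes_image_subset s t)
  then have stB: "s ` t ` B \<subseteq> {1..n}" by (simp add: permutes_image_subset s)
  have "J2_act s (cls {1..n} (sym_diff (t ` B) B)) = cls {1..n} (s ` sym_diff (t ` B) B)"
    using tB B by (intro J2_act_cls[OF s]) auto
  also have "s ` sym_diff (t ` B) B = sym_diff (s ` t ` B) (s ` B)"
    using permutes_inj[OF s] by (simp add: image_Un image_set_diff)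
  finally have act: "J2_act s (cls {1..n} (sym_diff (t ` B) B)) = cls {1..n} (sym_diff (s ` t ` B) (s ` B))" .
  have "cls {1..n} (sym_diff (s ` B) B) \<otimes>\<^bsub>J2 n\<^esub> J2_act s (cls {1..n} (sym_diff (t ` B) B))
      = cls {1..n} (sym_diff (sym_diff (s ` B) B) (sym_diff (s ` t ` B) (s ` B)))"
    unfolding act using B sB stB by (intro J2_mult_cls) auto
  also have "\<dots> = cls {1..n} (sym_diff ((s \<circ> t) ` B) B)"
    by (rule arg_cong[where f = "cls {1..n}"]) (auto simp: image_comp[symmetric])
  finally show "cls {1..n} (sym_diff ((s \<otimes>\<^bsub>sym_group n\<^esub> t) ` B) B) =
      cls {1..n} (sym_diff (s ` B) B) \<otimes>\<^bsub>J2 n\<^esub> J2_act s (cls {1..n} (sym_diff (t ` B) B))"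
    by (simp add: sym_group_mult)
qed

lemma principal_on_cyclic_J2:
  assumes s: "s permutes {1..n}"
    and "principal_on (J2 n) J2_act (generate (sym_group n) {s}) f"
  obtains B where "B \<subseteq> {1..n}" "f s = cls {1..n} (sym_diff (s ` B) B)"
proof -
  have "s \<in> generate (sym_group n) {s}" by (rule generate.incl) simp
  with assms(2) obtain m where "m \<in> carrier (J2 n)"
    and m: "f s = J2_act s m \<otimes>\<^bsub>J2 n\<^esub> inv\<^bsub>J2 n\<^esub> m"
    unfolding principal_on_def by blast
  then obtain B where "B \<subseteq> {1..n}" "m = cls {1..n} B" by (auto simp: J2_carrier)
  with m s have "f s = cls {1..n} (sym_diff (s ` B) B)" by (simp add: J2_coboundary_cls)
  with \<open>B \<subseteq> {1..n}\<close> show ?thesis by (rule that)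
qed

theorem H1_star_trivial_sym_group_J2:
  assumes "n \<ge> 1"
  shows "H1_star_trivial (sym_group n) (J2 n) J2_act"
  unfolding H1_star_trivial_def
proof (intro allI impI, elim conjE)
  let ?N = "{1..n}"
  fix f assume f: "crossed_hom (sym_group n) (J2 n) J2_act f"
    and local: "\<forall>g\<in>carrier (sym_group n). principal_on (J2 n) J2_act (generate (sym_group n) {g}) f"
  have star_coboundary: "\<exists>B\<subseteq>?N. f (transpose 1 i) = cls ?N (sym_diff (transpose 1 i ` B) B)"
    if "i \<in> ?N" for i
  proof -
    have t: "transpose 1 i permutes ?N" using that \<open>n \<ge> 1\<close> by (intro permutes_swap_id) auto
    with local have "principal_on (J2 n) J2_act (generate (sym_group n) {transpose 1 i}) f"
      by (simp add: sym_group_carrier)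
    then obtain B where "B \<subseteq> ?N" "f (transpose 1 i) = cls ?N (sym_diff (transpose 1 i ` B) B)"
      by (rule principal_on_cyclic_J2[OF t])
    then show ?thesis by blast
  qed
  define A where "A = {i \<in> ?N. i \<noteq> 1 \<and> f (transpose 1 i) = cls ?N {1, i}}"
  have A: "A \<subseteq> ?N" by (auto simp: A_def)
  have f_eq: "f s = cls ?N (sym_diff (s ` A) A)" if "s permutes ?N" for s
  proof (rule crossed_hom_sym_group_eqI[OF f crossed_hom_J2_coboundary[OF A] _ _ that])
    show "1 \<in> ?N" using \<open>n \<ge> 1\<close> by simp
    fix i assume i: "i \<in> ?N"
    then obtain B where B: "f (transpose 1 i) = cls ?N (sym_diff (transpose 1 i ` B) B)"
      using star_coboundary by blast
    show "f (transpose 1 i) = cls ?N (sym_diff (transpose 1 i ` A) A)"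
    proof (cases "i = 1")
      case True
      with B show ?thesis by simp
    next
      case False
      have "1 \<notin> A" by (simp add: A_def)
      then have A_image: "sym_diff (transpose 1 i ` A) A = (if i \<in> A then {1, i} else {})"
        by (simp add: sym_diff_transpose_image)
      have "f (transpose 1 i) = cls ?N {} \<or> f (transpose 1 i) = cls ?N {1, i}"
        using B by (simp add: sym_diff_transpose_image)
      with i False show ?thesis
        unfolding A_image by (auto simp: A_def)
    qed
  qed
  show "principal_on (J2 n) J2_act (carrier (sym_group n)) f"
    unfolding principal_on_def
  proof (intro bexI ballI)
    show "cls ?N A \<in> carrier (J2 n)" using A by (rule cls_in_J2_carrier)
    fix s assume "s \<in> carrier (sym_group n)"
    then have s: "s permutes ?N" by (simp add: sym_group_carrier)
    show "f s = J2_act s (cls ?N A) \<otimes>\<^bsub>J2 n\<^esub> inv\<^bsub>J2 n\<^esub> cls ?N A"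
      by (simp only: f_eq[OF s] J2_coboundary_cls[OF s A])
  qed
qed

theorem lemma2:
  fixes g :: nat
  shows "H1_star_trivial (sym_group (2 * g + 2)) (J2 (2 * g + 2)) J2_act"
  by (rule H1_star_trivial_sym_group_J2) simp

end
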